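(* Let $L$ be a metric flag triangulation of $\mathbb{S}^2$ which is not the boundary of a $3$-simplex, and let $s$ be a Euclidean vertex of $L$. (a) If $s$ is $3$-Euclidean, then the link $L_s$ and the star $\mathrm{St}_L(s)$ are full subcomplexes of $L$. (b) If $s$ is $4$-Euclidean and $L$ is not the suspension of a $3$-gon, then $L_s$ and $\mathrm{St}_L(s)$ are full subcomplexes of $L$.
   Context: A simplicial complex with edges labeled by integers $\ge 2$ is metric flag if it is the labeled nerve of a Coxeter system $(W,S)$: the vertex set is $S$, a nonempty subset $T\subseteq S$ spans a simplex iff the subgroup $W_T$ generated by $T$ is finite, and the edge $\{s,t\}$ is labeled $m_{st}$ (the order of $st$). A subcomplex is full if every simplex of $L$ whose vertices lie in the subcomplex belongs to it. For a vertex $s$: the star $\mathrm{St}_L(s)$ is the subcomplex of all closed simplices containing $s$; the link $L_s$ is the subcomplex of all closed simplices contained in simplices containing $s$ but not containing $s$; the valence of $s$ is the number of vertices of $L_s$. A vertex $s$ is $3$-Euclidean if it has valence $3$ and its link vertices $s_0,s_1,s_2$ satisfy $\pi/m_{s_0s_1}+\pi/m_{s_1s_2}+\pi/m_{s_2s_0}=\pi$; it is $4$-Euclidean if it has valence $4$ and its link is a $4$-cycle $s_0s_1s_2s_3$ with $m_{s_is_{i+1}}=2$ for all $i$ (mod $4$); it is Euclidean if it is $3$- or $4$-Euclidean. $L$ is the suspension of an $n$-gon if it is the simplicial join of two non-adjacent vertices (the suspension points) with an $n$-cycle. *)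

theory Defs
  imports "HOL-Analysis.Analysis"
begin

text \<open>Coxeter matrices on a generating set S. The value m s t = 0 encodes m_st = infinity.\<close>
definition coxeter_matrix :: "'a set \<Rightarrow> ('a \<Rightarrow> 'a \<Rightarrow> nat) \<Rightarrow> bool" where
  "coxeter_matrix S m \<longleftrightarrow>
     (\<forall>s\<in>S. m s s = 1) \<and> (\<forall>s\<in>S. \<forall>t\<in>S. m s t = m t s) \<and>
     (\<forall>s\<in>S. \<forall>t\<in>S. s \<noteq> t \<longrightarrow> m s t \<noteq> 1)"

definition alt_word :: "'a \<Rightarrow> 'a \<Rightarrow> nat \<Rightarrow> 'a list" where
  "alt_word s t k = concat (replicate k [s, t])"

text \<open>Equality of words in the Coxeter group W presented by
  < S | s^2 = 1, (st)^(m_st) = 1 for m_st finite >: the congruence on words generated by the relations.\<close>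
inductive cox_eq :: "'a set \<Rightarrow> ('a \<Rightarrow> 'a \<Rightarrow> nat) \<Rightarrow> 'a list \<Rightarrow> 'a list \<Rightarrow> bool"
  for S m where
  refl: "cox_eq S m w w"
| sym: "cox_eq S m u w \<Longrightarrow> cox_eq S m w u"
| trans: "cox_eq S m u v \<Longrightarrow> cox_eq S m v w \<Longrightarrow> cox_eq S m u w"
| cong: "cox_eq S m x y \<Longrightarrow> cox_eq S m (u @ x @ v) (u @ y @ v)"
| invol: "s \<in> S \<Longrightarrow> cox_eq S m [s, s] []"
| braid: "s \<in> S \<Longrightarrow> t \<in> S \<Longrightarrow> m s t \<noteq> 0 \<Longrightarrow> cox_eq S m (alt_word s t (m s t)) []"

definition cox_elem :: "'a set \<Rightarrow> ('a \<Rightarrow> 'a \<Rightarrow> nat) \<Rightarrow> 'a list \<Rightarrow> 'a list set" where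
  "cox_elem S m w = {v. cox_eq S m w v}"

definition special_subgroup :: "'a set \<Rightarrow> ('a \<Rightarrow> 'a \<Rightarrow> nat) \<Rightarrow> 'a set \<Rightarrow> 'a list set set" where
  "special_subgroup S m T = cox_elem S m ` lists T"

definition nerve :: "'a set \<Rightarrow> ('a \<Rightarrow> 'a \<Rightarrow> nat) \<Rightarrow> 'a set set" where
  "nerve S m = {T. T \<noteq> {} \<and> finite T \<and> T \<subseteq> S \<and> finite (special_subgroup S m T)}"

text \<open>Simplicial complexes are represented as sets of (finite nonempty) vertex sets.\<close>
definition verts :: "'a set set \<Rightarrow> 'a set" where
  "verts K = \<Union>K"

text \<open>Geometric realization, inside the function space 'a => real (product topology).\<close>
definition realization :: "'a set set \<Rightarrow> ('a \<Rightarrow> real) set" where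
  "realization K = {x. \<exists>\<sigma>\<in>K. (\<forall>v. v \<notin> \<sigma> \<longrightarrow> x v = 0) \<and> (\<forall>v. 0 \<le> x v) \<and> sum x \<sigma> = 1}"

definition triangulates_S2 :: "'a set set \<Rightarrow> bool" where
  "triangulates_S2 K \<longleftrightarrow> finite (verts K) \<and> (\<forall>\<sigma>\<in>K. \<sigma> \<noteq> {}) \<and>
     realization K homeomorphic sphere (0 :: real^3) 1"

definition boundary_of_3simplex :: "'a set set \<Rightarrow> bool" where
  "boundary_of_3simplex K \<longleftrightarrow> (\<exists>V. card V = 4 \<and> K = {\<sigma>. \<sigma> \<noteq> {} \<and> \<sigma> \<subset> V})"

definition star :: "'a set set \<Rightarrow> 'a \<Rightarrow> 'a set set" where
  "star K s = {\<tau>\<in>K. \<exists>\<sigma>\<in>K. s \<in> \<sigma> \<and> \<tau> \<subseteq> \<sigma>}"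

definition link :: "'a set set \<Rightarrow> 'a \<Rightarrow> 'a set set" where
  "link K s = {\<tau>\<in>K. \<exists>\<sigma>\<in>K. s \<in> \<sigma> \<and> \<tau> \<subseteq> \<sigma> \<and> s \<notin> \<tau>}"

definition valence :: "'a set set \<Rightarrow> 'a \<Rightarrow> nat" where
  "valence K s = card (verts (link K s))"

definition full_subcomplex :: "'a set set \<Rightarrow> 'a set set \<Rightarrow> bool" where
  "full_subcomplex K M \<longleftrightarrow> M \<subseteq> K \<and> (\<forall>\<sigma>\<in>K. \<sigma> \<subseteq> verts M \<longrightarrow> \<sigma> \<in> M)"

definition three_euclidean :: "'a set set \<Rightarrow> ('a \<Rightarrow> 'a \<Rightarrow> nat) \<Rightarrow> 'a \<Rightarrow> bool" where
  "three_euclidean K m s \<longleftrightarrow> valence K s = 3 \<and>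
     (\<exists>s0 s1 s2. verts (link K s) = {s0, s1, s2} \<and>
        pi / real (m s0 s1) + pi / real (m s1 s2) + pi / real (m s2 s0) = pi)"

definition cycle_complex :: "nat \<Rightarrow> (nat \<Rightarrow> 'a) \<Rightarrow> 'a set set" where
  "cycle_complex n c = {{c i} | i. i < n} \<union> {{c i, c ((i + 1) mod n)} | i. i < n}"

definition is_cycle :: "'a set set \<Rightarrow> nat \<Rightarrow> (nat \<Rightarrow> 'a) \<Rightarrow> bool" where
  "is_cycle C n c \<longleftrightarrow> 3 \<le> n \<and> inj_on c {..<n} \<and> C = cycle_complex n c"

definition four_euclidean :: "'a set set \<Rightarrow> ('a \<Rightarrow> 'a \<Rightarrow> nat) \<Rightarrow> 'a \<Rightarrow> bool" where
  "four_euclidean K m s \<longleftrightarrow> valence K s = 4 \<and>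
     (\<exists>c. is_cycle (link K s) 4 c \<and> (\<forall>i<4. m (c i) (c ((i + 1) mod 4)) = 2))"

definition suspension :: "'a \<Rightarrow> 'a \<Rightarrow> 'a set set \<Rightarrow> 'a set set" where
  "suspension a b C = {\<sigma> \<union> \<tau> | \<sigma> \<tau>. \<sigma> \<in> {{}, {a}, {b}} \<and> \<tau> \<in> insert {} C \<and> \<sigma> \<union> \<tau> \<noteq> {}}"

definition suspension_of_ngon :: "'a set set \<Rightarrow> nat \<Rightarrow> bool" where
  "suspension_of_ngon K n \<longleftrightarrow> (\<exists>a b c. a \<noteq> b \<and> a \<notin> c ` {..<n} \<and> b \<notin> c ` {..<n} \<and>
     is_cycle (cycle_complex n c) n c \<and> K = suspension a b (cycle_complex n c))"

end

theory Submission
  imports Defs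
begin

text \<open>The topological input is invariance of domain: a triangulated 2-sphere has no boundary
  points, so the star of a vertex of valence 3 consists of the three triangles over the edges of
  its link; and a subcomplex that already realizes a 2-sphere is the whole complex. Hence, for a
  valence-3 vertex s, a simplex on its three link vertices would close up the boundary of a
  tetrahedron. For a 4-Euclidean vertex the only candidates for non-full simplices are the
  diagonals of the square link; a diagonal a0 a2 in the nerve, together with the right angles
  along the square, forces a1 and a3 to commute with the finite group W_{a0,a2}, so the nerve
  contains the suspension of the triangle s a0 a2 and therefore equals it.\<close>

section \<open>Spaces homeomorphic to the 2-sphere\<close>

lemma homeomorphic_sphere_no_half_plane_chart:
  fixes R :: "('a \<Rightarrow> real) set" and \<phi> :: "('a \<Rightarrow> real) \<Rightarrow> real^2"
  assumes hom: "R homeomorphic sphere (0::real^3) 1"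
    and U: "openin (top_of_set R) U" and pU: "p \<in> U"
    and cont: "continuous_on U \<phi>" and inj: "inj_on \<phi> U" and p0: "\<phi> p = 0"
    and upper: "\<And>x. x \<in> U \<Longrightarrow> \<phi> x $ 2 \<ge> 0"
  shows False
proof -
  obtain h k where hk: "homeomorphism R (sphere (0::real^3) 1) h k"
    using hom unfolding homeomorphic_def by blast
  have UR: "U \<subseteq> R" using U by (rule openin_imp_subset)
  have open_hU: "openin (top_of_set (sphere (0::real^3) 1)) (h ` U)"
    using homeomorphism_imp_open_map[OF hk U] .
  have kh: "k (h x) = x" if "x \<in> U" for x using hk UR that homeomorphism_apply1 by blast
  have khU: "k ` h ` U = U"
    using kh by (force simp: image_image)
  have "continuous_on (h ` U) (\<phi> \<circ> k)"
  proof (rule continuous_on_compose)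
    have "h ` U \<subseteq> sphere 0 1" using hk UR homeomorphism_image1 by blast
    then show "continuous_on (h ` U) k"
      using homeomorphism_cont2[OF hk] continuous_on_subset by blast
    show "continuous_on (k ` h ` U) \<phi>" using cont khU by simp
  qed
  moreover have "inj_on (\<phi> \<circ> k) (h ` U)"
    using inj kh unfolding inj_on_def by (metis comp_apply imageE)
  ultimately have "openin (top_of_set UNIV) ((\<phi> \<circ> k) ` h ` U)"
    by (rule invariance_of_domain_sphere_affine_set[OF _ _ _ _ _ _ open_hU]) auto
  moreover have "(\<phi> \<circ> k) ` h ` U = \<phi> ` U" by (metis khU image_comp)
  ultimately have "open (\<phi> ` U)" by simp
  moreover have "0 \<in> \<phi> ` U" using pU p0 by (metis imageI)
  ultimately obtain e where e: "e > 0" "ball 0 e \<subseteq> \<phi> ` U"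
    using open_contains_ball by blast
  define y :: "real^2" where "y = (- e/2) *\<^sub>R axis 2 1"
  have "norm y = e/2" using e by (simp add: y_def)
  then have "y \<in> \<phi> ` U" using e by (auto simp: dist_norm)
  then have "0 \<le> y $ 2" using upper by blast
  then show False using e by (simp add: y_def axis_def)
qed

lemma homeomorphic_sphere_embedding_onto:
  fixes R :: "('a \<Rightarrow> real) set" and g :: "real^3 \<Rightarrow> ('a \<Rightarrow> real)"
  assumes hom: "R homeomorphic sphere (0::real^3) 1"
    and contg: "continuous_on (sphere 0 1) g" and injg: "inj_on g (sphere 0 1)"
    and gR: "g ` sphere 0 1 \<subseteq> R"
  shows "g ` sphere 0 1 = R"
proof (rule ccontr)
  assume "g ` sphere 0 1 \<noteq> R"
  then obtain r where rR: "r \<in> R" and rg: "r \<notin> g ` sphere 0 1" using gR by blast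
  obtain h k where hk: "homeomorphism R (sphere (0::real^3) 1) h k"
    using hom unfolding homeomorphic_def by blast
  define q where "q = h r"
  have qS: "q \<in> sphere 0 1" using hk rR homeomorphism_image1 q_def by blast
  have hgS: "(h \<circ> g) ` sphere 0 1 \<subseteq> sphere 0 1 - {q}"
  proof -
    have "h (g u) \<noteq> q" if "u \<in> sphere 0 1" for u
      using homeomorphism_apply1[OF hk] rR gR rg that unfolding q_def by (metis image_subset_iff imageI)
    then show ?thesis using gR hk homeomorphism_image1 by fastforce
  qed
  have "(sphere (0::real^3) 1 - {q}) homeomorphic (UNIV :: (real^2) set)"
    by (rule homeomorphic_punctured_sphere_affine) (use qS in auto)
  then obtain \<pi> \<rho> where pr: "homeomorphism (sphere (0::real^3) 1 - {q}) (UNIV :: (real^2) set) \<pi> \<rho>"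
    unfolding homeomorphic_def by blast
  define G where "G = \<pi> \<circ> (h \<circ> g)"
  have contG: "continuous_on (sphere 0 1) G"
    unfolding G_def
  proof (rule continuous_on_compose)
    show "continuous_on (sphere 0 1) (h \<circ> g)"
      by (rule continuous_on_compose[OF contg])
        (meson continuous_on_subset gR hk homeomorphism_cont1)
    show "continuous_on ((h \<circ> g) ` sphere 0 1) \<pi>"
      using homeomorphism_cont1[OF pr] hgS continuous_on_subset by blast
  qed
  have injG: "inj_on G (sphere 0 1)"
  proof (rule inj_onI)
    fix x y :: "real^3" assume xy: "x \<in> sphere 0 1" "y \<in> sphere 0 1" "G x = G y"
    have "h (g x) \<in> sphere 0 1 - {q}" "h (g y) \<in> sphere 0 1 - {q}"
      using hgS xy(1,2) by (simp_all add: image_subset_iff del: mem_sphere)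
    then have "h (g x) = h (g y)"
      using xy(3) homeomorphism_apply1[OF pr] unfolding G_def by (metis comp_apply)
    then have "g x = g y"
      using homeomorphism_apply1[OF hk] gR xy(1,2) by (metis image_subset_iff)
    then show "x = y" using inj_onD[OF injg _ xy(1,2)] by blast
  qed
  have "openin (top_of_set UNIV) (G ` sphere 0 1)"
    by (rule invariance_of_domain_sphere_affine_set[OF contG injG _ _ _ _ openin_subtopology_self])
      auto
  then have "open (G ` sphere 0 1)" by simp
  moreover have "compact (G ` sphere 0 1)"
    by (rule compact_continuous_image[OF contG]) simp
  moreover have "G ` sphere 0 1 \<noteq> {}" by (simp add: sphere_eq_empty)
  ultimately show False using compact_open[of "G ` sphere 0 1"] by simp
qed

section \<open>Complexes triangulating the 2-sphere\<close>

definition closed_under_faces :: "'a set set \<Rightarrow> bool" where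
  "closed_under_faces K \<longleftrightarrow> (\<forall>\<sigma>\<in>K. \<forall>\<tau>. \<tau> \<noteq> {} \<longrightarrow> \<tau> \<subseteq> \<sigma> \<longrightarrow> \<tau> \<in> K)"

lemma closed_under_facesD:
  "closed_under_faces K \<Longrightarrow> \<sigma> \<in> K \<Longrightarrow> \<tau> \<noteq> {} \<Longrightarrow> \<tau> \<subseteq> \<sigma> \<Longrightarrow> \<tau> \<in> K"
  unfolding closed_under_faces_def by blast

lemma realization_mono: "K \<subseteq> K' \<Longrightarrow> realization K \<subseteq> realization K'"
  unfolding realization_def by blast

lemma simplex_subset_if_realization_subset:
  assumes "realization K \<subseteq> realization K'" and "\<tau> \<in> K" "finite \<tau>" "\<tau> \<noteq> {}"
  shows "\<exists>\<sigma>\<in>K'. \<tau> \<subseteq> \<sigma>"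
proof -
  define y where "y = (\<lambda>v. if v \<in> \<tau> then 1 / real (card \<tau>) else 0)"
  have card: "card \<tau> > 0" using assms(3,4) by (simp add: card_gt_0_iff)
  then have "sum y \<tau> = 1" by (simp add: y_def)
  then have "y \<in> realization K" unfolding realization_def using assms(2) by (auto simp: y_def)
  then obtain \<sigma> where "\<sigma> \<in> K'" "\<forall>v. v \<notin> \<sigma> \<longrightarrow> y v = 0"
    using assms(1) unfolding realization_def by blast
  moreover have "y v \<noteq> 0" if "v \<in> \<tau>" for v using card that by (simp add: y_def)
  ultimately show ?thesis by blast
qed

lemma triangulation_S2_eq_subcomplex_containing_sphere:
  fixes g :: "real^3 \<Rightarrow> ('a \<Rightarrow> real)"
  assumes tri: "triangulates_S2 K" and sub: "K' \<subseteq> K" and faces: "closed_under_faces K'"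
    and contg: "continuous_on (sphere 0 1) g" and injg: "inj_on g (sphere 0 1)"
    and gK': "g ` sphere 0 1 \<subseteq> realization K'"
  shows "K = K'"
proof
  have "realization K homeomorphic sphere (0::real^3) 1" using tri triangulates_S2_def by blast
  then have "g ` sphere 0 1 = realization K"
    using homeomorphic_sphere_embedding_onto contg injg gK' realization_mono[OF sub] by blast
  then have real_sub: "realization K \<subseteq> realization K'" using gK' by simp
  show "K \<subseteq> K'"
  proof
    fix \<tau> assume \<tau>: "\<tau> \<in> K"
    have "finite \<tau>" "\<tau> \<noteq> {}"
      using tri \<tau> unfolding triangulates_S2_def verts_def by (auto intro: finite_subset)
    then show "\<tau> \<in> K'"
      using simplex_subset_if_realization_subset[OF real_sub \<tau>] closed_under_facesD[OF faces] by blast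
  qed
qed (rule sub)

lemma inj_on_sphere_if_radial:
  fixes g :: "real^3 \<Rightarrow> 'b" and L :: "'b \<Rightarrow> real^3"
  assumes "\<And>u. u \<in> sphere 0 1 \<Longrightarrow> \<exists>t>0. L (g u) = t *\<^sub>R u"
  shows "inj_on g (sphere 0 1)"
proof -
  have "u = L (g u) /\<^sub>R norm (L (g u))" if "u \<in> sphere 0 1" for u
    using assms[OF that] that by auto
  then show ?thesis unfolding inj_on_def by metis
qed

text \<open>Normalising the weights gives barycentric coordinates of a point of the realization;
  the positions p recover the direction of u from them, which makes the map injective.\<close>
lemma sphere_embedding_from_weights:
  fixes b :: "real^3 \<Rightarrow> 'a \<Rightarrow> real" and p :: "'a \<Rightarrow> real^3"
  assumes finV: "finite V"
    and cont: "\<And>v. v \<in> V \<Longrightarrow> continuous_on (sphere 0 1) (\<lambda>u. b u v)"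
    and nonneg: "\<And>u v. u \<in> sphere 0 1 \<Longrightarrow> v \<in> V \<Longrightarrow> b u v \<ge> 0"
    and pos: "\<And>u. u \<in> sphere 0 1 \<Longrightarrow> (\<Sum>v\<in>V. b u v) > 0"
    and supp: "\<And>u. u \<in> sphere 0 1 \<Longrightarrow> \<exists>\<sigma>\<in>K. \<sigma> \<subseteq> V \<and> (\<forall>v\<in>V-\<sigma>. b u v = 0)"
    and rec: "\<And>u. u \<in> sphere 0 1 \<Longrightarrow> (\<Sum>v\<in>V. b u v *\<^sub>R p v) = u"
  obtains g :: "real^3 \<Rightarrow> 'a \<Rightarrow> real" where "continuous_on (sphere 0 1) g" "inj_on g (sphere 0 1)"
    "g ` sphere 0 1 \<subseteq> realization K"
proof -
  define D where "D u = (\<Sum>v\<in>V. b u v)" for u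
  define g where "g u = (\<lambda>v. if v \<in> V then b u v / D u else 0)" for u
  have "continuous_on (sphere 0 1) g"
    unfolding g_def
  proof (rule continuous_on_coordinatewise_then_product)
    fix v
    have "continuous_on (sphere 0 1) D" unfolding D_def
      by (rule continuous_on_sum) (use cont in auto)
    moreover have "\<forall>u\<in>sphere 0 1. D u \<noteq> 0" using pos D_def by (metis less_irrefl)
    ultimately show "continuous_on (sphere 0 1) (\<lambda>u. if v \<in> V then b u v / D u else 0)"
      using cont by (cases "v \<in> V") (auto intro!: continuous_on_divide)
  qed
  moreover have "inj_on g (sphere 0 1)"
  proof (rule inj_on_sphere_if_radial[where L = "\<lambda>x. \<Sum>v\<in>V. x v *\<^sub>R p v"])
    fix u :: "real^3" assume u: "u \<in> sphere 0 1"
    have "(\<Sum>v\<in>V. g u v *\<^sub>R p v) = (\<Sum>v\<in>V. (1 / D u) *\<^sub>R (b u v *\<^sub>R p v))"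
      by (rule sum.cong) (auto simp: g_def)
    also have "\<dots> = (1 / D u) *\<^sub>R (\<Sum>v\<in>V. b u v *\<^sub>R p v)"
      by (simp only: scaleR_sum_right)
    also have "\<dots> = (1 / D u) *\<^sub>R u" using rec[OF u] by simp
    finally show "\<exists>t>0. (\<Sum>v\<in>V. g u v *\<^sub>R p v) = t *\<^sub>R u"
      using pos[OF u] D_def by (metis zero_less_divide_1_iff)
  qed
  moreover have "g ` sphere 0 1 \<subseteq> realization K"
  proof
    fix x assume "x \<in> g ` sphere 0 1"
    then obtain u where u: "u \<in> sphere 0 1" and x: "x = g u" by blast
    obtain \<sigma> where \<sigma>: "\<sigma> \<in> K" "\<sigma> \<subseteq> V" "\<forall>v\<in>V-\<sigma>. b u v = 0" using supp[OF u] by blast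
    have zero: "\<forall>v. v \<notin> \<sigma> \<longrightarrow> x v = 0" using \<sigma> by (auto simp: x g_def)
    have "sum x \<sigma> = sum x V"
      by (rule sum.mono_neutral_left) (use finV \<sigma> zero in auto)
    also have "\<dots> = (\<Sum>v\<in>V. b u v / D u)" by (rule sum.cong) (auto simp: x g_def)
    also have "\<dots> = 1" using pos[OF u] by (simp add: D_def sum_divide_distrib[symmetric])
    finally have "sum x \<sigma> = 1" .
    moreover have "\<forall>v. 0 \<le> x v" using nonneg[OF u] pos[OF u] by (auto simp: x g_def D_def)
    ultimately show "x \<in> realization K" unfolding realization_def using \<sigma> zero by auto
  qed
  ultimately show thesis by (rule that)
qed

lemma vec3_eqI:
  fixes u v :: "real^3"
  assumes "u $ 1 = v $ 1" "u $ 2 = v $ 2" "u $ 3 = v $ 3"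
  shows "u = v"
  using assms by (simp add: vec_eq_iff forall_3)

text \<open>The weights are the barycentric coordinates of u with respect to the regular tetrahedron
  with vertices (1,1,1), (1,-1,-1), (-1,1,-1), (-1,-1,1), shifted by their minimum so that
  u is projected radially onto a face.\<close>
lemma tetrahedron_boundary_contains_sphere:
  assumes d: "distinct [w0, w1, w2, w3]"
  obtains g :: "real^3 \<Rightarrow> 'a \<Rightarrow> real" where "continuous_on (sphere 0 1) g" "inj_on g (sphere 0 1)"
    "g ` sphere 0 1 \<subseteq> realization {\<sigma>. \<sigma> \<noteq> {} \<and> \<sigma> \<subset> {w0,w1,w2,w3}}"
proof -
  from d have dd: "w0 \<noteq> w1" "w0 \<noteq> w2" "w0 \<noteq> w3" "w1 \<noteq> w2" "w1 \<noteq> w3" "w2 \<noteq> w3"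
    by auto
  define V where "V = {w0,w1,w2,w3}"
  define K' where "K' = {\<sigma>. \<sigma> \<noteq> {} \<and> \<sigma> \<subset> V}"
  define A0 :: "real^3 \<Rightarrow> real" where "A0 u = (u$1 + u$2 + u$3)/4" for u
  define A1 :: "real^3 \<Rightarrow> real" where "A1 u = (u$1 - u$2 - u$3)/4" for u
  define A2 :: "real^3 \<Rightarrow> real" where "A2 u = (- u$1 + u$2 - u$3)/4" for u
  define A3 :: "real^3 \<Rightarrow> real" where "A3 u = (- u$1 - u$2 + u$3)/4" for u
  define mn where "mn u = min (min (A0 u) (A1 u)) (min (A2 u) (A3 u))" for u
  define b where "b u v = (if v = w0 then A0 u - mn u else if v = w1 then A1 u - mn u
      else if v = w2 then A2 u - mn u else A3 u - mn u)" for u v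
  define p :: "'a \<Rightarrow> real^3" where "p v = (if v = w0 then vector [1,1,1] else if v = w1 then vector [1,-1,-1]
      else if v = w2 then vector [-1,1,-1] else vector [-1,-1,1])" for v
  have sumV: "(\<Sum>v\<in>V. f v) = f w0 + f w1 + f w2 + f w3" for f :: "'a \<Rightarrow> 'b::comm_monoid_add"
    using dd by (simp add: V_def add.assoc)
  have cont: "continuous_on (sphere 0 1) (\<lambda>u. b u v)" if "v \<in> V" for v
  proof -
    have cA: "continuous_on UNIV A0" "continuous_on UNIV A1" "continuous_on UNIV A2" "continuous_on UNIV A3"
      unfolding A0_def A1_def A2_def A3_def by (auto intro!: continuous_intros)
    have cm: "continuous_on UNIV mn" unfolding mn_def by (intro continuous_intros cA)
    have "continuous_on (sphere 0 1) (\<lambda>u. A0 u - mn u)" "continuous_on (sphere 0 1) (\<lambda>u. A1 u - mn u)"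
      "continuous_on (sphere 0 1) (\<lambda>u. A2 u - mn u)" "continuous_on (sphere 0 1) (\<lambda>u. A3 u - mn u)"
      by (auto intro!: continuous_on_subset[OF continuous_on_diff[OF _ cm]] cA)
    then show ?thesis unfolding b_def by (cases "v = w0"; cases "v = w1"; cases "v = w2") simp_all
  qed
  have finV: "finite V" by (simp add: V_def)
  have nonneg: "0 \<le> b u v" if "u \<in> sphere 0 1" "v \<in> V" for u v by (auto simp: b_def mn_def)
  have pos: "0 < (\<Sum>v\<in>V. b u v)" if u: "u \<in> sphere 0 1" for u
  proof -
    have "mn u < 0"
    proof (rule ccontr)
      assume "\<not> mn u < 0"
      then have "A0 u \<ge> 0" "A1 u \<ge> 0" "A2 u \<ge> 0" "A3 u \<ge> 0" by (auto simp: mn_def)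
      then have "A0 u = 0" "A1 u = 0" "A2 u = 0" "A3 u = 0" by (auto simp: A0_def A1_def A2_def A3_def)
      then have "u = 0" by (intro vec3_eqI) (auto simp: A0_def A1_def A2_def A3_def)
      then show False using u by simp
    qed
    then show ?thesis
      using dd by (simp add: sumV b_def A0_def A1_def A2_def A3_def field_simps)
  qed
  have rec: "(\<Sum>v\<in>V. b u v *\<^sub>R p v) = u" if "u \<in> sphere 0 1" for u
    using dd by (intro vec3_eqI) (simp_all add: sumV b_def p_def A0_def A1_def A2_def A3_def field_simps)
  have supp: "\<exists>\<sigma>\<in>K'. \<sigma> \<subseteq> V \<and> (\<forall>v\<in>V - \<sigma>. b u v = 0)" if "u \<in> sphere 0 1" for u
  proof -
    have "mn u = A0 u \<or> mn u = A1 u \<or> mn u = A2 u \<or> mn u = A3 u" by (auto simp: mn_def min_def)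
    then have "\<exists>w\<in>V. b u w = 0" using dd by (auto simp: V_def b_def)
    then obtain w where w: "w \<in> V" "b u w = 0" by blast
    then have "V - {w} \<in> K'" using dd by (auto simp: K'_def V_def)
    then show ?thesis using w by blast
  qed
  from sphere_embedding_from_weights[OF finV cont nonneg pos supp rec]
  obtain g :: "real^3 \<Rightarrow> 'a \<Rightarrow> real" where
    "continuous_on (sphere 0 1) g" "inj_on g (sphere 0 1)" "g ` sphere 0 1 \<subseteq> realization K'"
    by blast
  then show thesis unfolding K'_def V_def by (rule that)
qed

lemma triangulation_S2_eq_tetrahedron_boundary:
  assumes tri: "triangulates_S2 K" and faces: "closed_under_faces K"
    and d: "distinct [w0, w1, w2, w3]"
    and t: "{w1,w2,w3} \<in> K" "{w0,w2,w3} \<in> K" "{w0,w1,w3} \<in> K" "{w0,w1,w2} \<in> K"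
  shows "boundary_of_3simplex K"
proof -
  from d have dd: "w0 \<noteq> w1" "w0 \<noteq> w2" "w0 \<noteq> w3" "w1 \<noteq> w2" "w1 \<noteq> w3" "w2 \<noteq> w3"
    by auto
  define V where "V = {w0,w1,w2,w3}"
  define K' where "K' = {\<sigma>. \<sigma> \<noteq> {} \<and> \<sigma> \<subset> V}"
  have facet: "V - {w} \<in> K" if "w \<in> V" for w
  proof -
    have "V - {w0} = {w1,w2,w3}" "V - {w1} = {w0,w2,w3}" "V - {w2} = {w0,w1,w3}"
      "V - {w3} = {w0,w1,w2}"
      using dd by (auto simp: V_def)
    moreover have "w = w0 \<or> w = w1 \<or> w = w2 \<or> w = w3" using that by (simp add: V_def)
    ultimately show ?thesis using t by (elim disjE) simp_all
  qed
  have sub: "K' \<subseteq> K"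
  proof
    fix \<sigma> assume "\<sigma> \<in> K'"
    then have "\<sigma> \<subset> V" "\<sigma> \<noteq> {}" by (simp_all add: K'_def)
    then obtain w where "w \<in> V" "\<sigma> \<subseteq> V - {w}" by blast
    then show "\<sigma> \<in> K" using closed_under_facesD[OF faces facet] \<open>\<sigma> \<noteq> {}\<close> by blast
  qed
  have faces': "closed_under_faces K'" by (auto simp: closed_under_faces_def K'_def)
  obtain g :: "real^3 \<Rightarrow> 'a \<Rightarrow> real" where
    "continuous_on (sphere 0 1) g" "inj_on g (sphere 0 1)" "g ` sphere 0 1 \<subseteq> realization K'"
    by (rule tetrahedron_boundary_contains_sphere[OF d, folded V_def, folded K'_def])
  then have "K = K'" by (rule triangulation_S2_eq_subcomplex_containing_sphere[OF tri sub faces'])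
  moreover have "card V = 4" using dd by (simp add: V_def)
  ultimately show ?thesis unfolding boundary_of_3simplex_def K'_def by blast
qed

text \<open>Here the poles sit at (0,0,\<plusminus>1) and the equator at (2,0,0), (-1,1,0), (-1,-1,0);
  the weights of the poles and of the equator are shifted by their minima separately.\<close>
lemma suspension_of_triangle_contains_sphere:
  assumes d: "distinct [n, n', e0, e1, e2]"
  obtains g :: "real^3 \<Rightarrow> 'a \<Rightarrow> real" where "continuous_on (sphere 0 1) g" "inj_on g (sphere 0 1)"
    "g ` sphere 0 1 \<subseteq> realization
      {\<sigma>. \<sigma> \<noteq> {} \<and> \<sigma> \<subseteq> {n,n',e0,e1,e2} \<and> \<not> {n,n'} \<subseteq> \<sigma> \<and> \<not> {e0,e1,e2} \<subseteq> \<sigma>}"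
proof -
  from d have dd: "n \<noteq> n'" "n \<noteq> e0" "n \<noteq> e1" "n \<noteq> e2" "n' \<noteq> e0" "n' \<noteq> e1"
    "n' \<noteq> e2" "e0 \<noteq> e1" "e0 \<noteq> e2" "e1 \<noteq> e2"
    by auto
  define V where "V = {n,n',e0,e1,e2}"
  define K' where "K' = {\<sigma>. \<sigma> \<noteq> {} \<and> \<sigma> \<subseteq> V \<and> \<not> {n,n'} \<subseteq> \<sigma> \<and> \<not> {e0,e1,e2} \<subseteq> \<sigma>}"
  define P :: "real^3 \<Rightarrow> real" where "P u = u$3/2" for u
  define Q :: "real^3 \<Rightarrow> real" where "Q u = - u$3/2" for u
  define E0 :: "real^3 \<Rightarrow> real" where "E0 u = u$1/3" for u
  define E1 :: "real^3 \<Rightarrow> real" where "E1 u = - u$1/6 + u$2/2" for u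
  define E2 :: "real^3 \<Rightarrow> real" where "E2 u = - u$1/6 - u$2/2" for u
  define mp where "mp u = min (P u) (Q u)" for u
  define me where "me u = min (min (E0 u) (E1 u)) (E2 u)" for u
  define b where "b u v = (if v = n then P u - mp u else if v = n' then Q u - mp u
      else if v = e0 then E0 u - me u else if v = e1 then E1 u - me u else E2 u - me u)" for u v
  define p :: "'a \<Rightarrow> real^3" where "p v = (if v = n then vector [0,0,1] else if v = n' then vector [0,0,-1]
      else if v = e0 then vector [2,0,0] else if v = e1 then vector [-1,1,0] else vector [-1,-1,0])" for v
  have sumV: "(\<Sum>v\<in>V. f v) = f n + f n' + f e0 + f e1 + f e2" for f :: "'a \<Rightarrow> 'b::comm_monoid_add"
    using dd by (simp add: V_def add.assoc)
  have cont: "continuous_on (sphere 0 1) (\<lambda>u. b u v)" if "v \<in> V" for v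
  proof -
    have cA: "continuous_on UNIV P" "continuous_on UNIV Q" "continuous_on UNIV E0"
      "continuous_on UNIV E1" "continuous_on UNIV E2"
      unfolding P_def Q_def E0_def E1_def E2_def by (auto intro!: continuous_intros)
    have cm: "continuous_on UNIV mp" "continuous_on UNIV me"
      unfolding mp_def me_def by (auto intro!: continuous_intros cA)
    have "continuous_on (sphere 0 1) (\<lambda>u. P u - mp u)" "continuous_on (sphere 0 1) (\<lambda>u. Q u - mp u)"
      "continuous_on (sphere 0 1) (\<lambda>u. E0 u - me u)" "continuous_on (sphere 0 1) (\<lambda>u. E1 u - me u)"
      "continuous_on (sphere 0 1) (\<lambda>u. E2 u - me u)"
      by (auto intro!: continuous_on_subset[OF continuous_on_diff] cA cm)
    then show ?thesis
      unfolding b_def by (cases "v = n"; cases "v = n'"; cases "v = e0"; cases "v = e1") simp_all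
  qed
  have finV: "finite V" by (simp add: V_def)
  have nonneg: "0 \<le> b u v" if "u \<in> sphere 0 1" "v \<in> V" for u v by (auto simp: b_def mp_def me_def)
  have pos: "0 < (\<Sum>v\<in>V. b u v)" if u: "u \<in> sphere 0 1" for u
  proof -
    have "mp u < 0 \<or> me u < 0"
    proof (rule ccontr)
      assume "\<not> (mp u < 0 \<or> me u < 0)"
      then have "u $ 3 = 0" "u $ 1 = 0" "u $ 2 = 0"
        by (auto simp: mp_def me_def P_def Q_def E0_def E1_def E2_def)
      then have "u = 0" by (intro vec3_eqI) auto
      then show False using u by simp
    qed
    moreover have "mp u \<le> 0" "me u \<le> 0"
      by (auto simp: mp_def me_def P_def Q_def E0_def E1_def E2_def min_def)
    ultimately show ?thesis
      using dd by (simp add: sumV b_def P_def Q_def E0_def E1_def E2_def field_simps; linarith)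
  qed
  have rec: "(\<Sum>v\<in>V. b u v *\<^sub>R p v) = u" if "u \<in> sphere 0 1" for u
    using dd by (intro vec3_eqI)
      (simp_all add: sumV b_def p_def P_def Q_def E0_def E1_def E2_def field_simps)
  have supp: "\<exists>\<sigma>\<in>K'. \<sigma> \<subseteq> V \<and> (\<forall>v\<in>V - \<sigma>. b u v = 0)" if "u \<in> sphere 0 1" for u
  proof -
    have "b u n = 0 \<or> b u n' = 0" using dd by (auto simp: b_def mp_def min_def)
    then obtain t' where t': "t' \<in> {n, n'}" "b u t' = 0" by blast
    have "b u e0 = 0 \<or> b u e1 = 0 \<or> b u e2 = 0" using dd by (auto simp: b_def me_def min_def)
    then obtain w where w: "w \<in> {e0,e1,e2}" "b u w = 0" by blast
    define \<sigma> where "\<sigma> = ({n,n'} - {t'}) \<union> ({e0,e1,e2} - {w})"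
    have "\<sigma> \<in> K'" using t'(1) w(1) dd by (auto simp: K'_def V_def \<sigma>_def)
    moreover have "\<sigma> \<subseteq> V" "\<forall>v\<in>V - \<sigma>. b u v = 0" using t' w by (auto simp: V_def \<sigma>_def)
    ultimately show ?thesis by blast
  qed
  from sphere_embedding_from_weights[OF finV cont nonneg pos supp rec]
  obtain g :: "real^3 \<Rightarrow> 'a \<Rightarrow> real" where
    "continuous_on (sphere 0 1) g" "inj_on g (sphere 0 1)" "g ` sphere 0 1 \<subseteq> realization K'"
    by blast
  then show thesis unfolding K'_def V_def by (rule that)
qed

lemma triangulation_S2_eq_suspension_of_triangle:
  assumes tri: "triangulates_S2 K" and faces: "closed_under_faces K"
    and d: "distinct [n, n', e0, e1, e2]"
    and cones: "\<And>q. q \<in> {n, n'} \<Longrightarrow> {q,e0,e1} \<in> K \<and> {q,e1,e2} \<in> K \<and> {q,e2,e0} \<in> K"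
  shows "K = {\<sigma>. \<sigma> \<noteq> {} \<and> \<sigma> \<subseteq> {n,n',e0,e1,e2} \<and> \<not> {n,n'} \<subseteq> \<sigma> \<and> \<not> {e0,e1,e2} \<subseteq> \<sigma>}"
    (is "K = ?K'")
proof -
  have sub: "?K' \<subseteq> K"
  proof
    fix \<sigma> assume "\<sigma> \<in> ?K'"
    then have \<sigma>: "\<sigma> \<noteq> {}" "\<sigma> \<subseteq> {n,n',e0,e1,e2}" "\<not> {n,n'} \<subseteq> \<sigma>" "\<not> {e0,e1,e2} \<subseteq> \<sigma>"
      by auto
    obtain q where q: "q \<in> {n, n'}" "\<sigma> \<inter> {n,n'} \<subseteq> {q}" using \<sigma>(3) by blast
    have "\<exists>T\<in>{{q,e0,e1},{q,e1,e2},{q,e2,e0}}. \<sigma> \<subseteq> T"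
      using \<sigma>(2,4) q(2) by auto
    then obtain T where "T \<in> K" "\<sigma> \<subseteq> T" using cones[OF q(1)] by blast
    then show "\<sigma> \<in> K" using closed_under_facesD[OF faces] \<sigma>(1) by blast
  qed
  have faces': "closed_under_faces ?K'" by (auto simp: closed_under_faces_def)
  obtain g :: "real^3 \<Rightarrow> 'a \<Rightarrow> real" where
    "continuous_on (sphere 0 1) g" "inj_on g (sphere 0 1)" "g ` sphere 0 1 \<subseteq> realization ?K'"
    by (rule suspension_of_triangle_contains_sphere[OF d])
  then show ?thesis by (rule triangulation_S2_eq_subcomplex_containing_sphere[OF tri sub faces'])
qed

lemma proper_subset_of_triangle:
  assumes "E \<subseteq> {x,y,z}" "\<not> {x,y,z} \<subseteq> E"
  shows "E \<in> insert {} {{x},{y},{z},{x,y},{y,z},{z,x}}"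
proof -
  have "E \<in> Pow {x,y,z} - {{x,y,z}}" using assms by auto
  then show ?thesis by (auto simp: Pow_insert insert_commute)
qed

lemma suspension_of_ngon_triangle:
  assumes "distinct [n, n', e0, e1, e2]"
  shows "suspension_of_ngon
    {\<sigma>. \<sigma> \<noteq> {} \<and> \<sigma> \<subseteq> {n,n',e0,e1,e2} \<and> \<not> {n,n'} \<subseteq> \<sigma> \<and> \<not> {e0,e1,e2} \<subseteq> \<sigma>} 3"
    (is "suspension_of_ngon ?K 3")
proof -
  from assms have d: "n \<noteq> n'" "n \<noteq> e0" "n \<noteq> e1" "n \<noteq> e2" "n' \<noteq> e0" "n' \<noteq> e1"
    "n' \<noteq> e2" "e0 \<noteq> e1" "e0 \<noteq> e2" "e1 \<noteq> e2"
    by auto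
  define c where "c = (\<lambda>i::nat. if i = 0 then e0 else if i = 1 then e1 else e2)"
  have l3: "{..<3::nat} = {0,1,2}" by auto
  have img: "c ` {..<3} = {e0,e1,e2}" by (auto simp: l3 c_def)
  have "cycle_complex 3 c = (\<lambda>i. {c i}) ` {..<3} \<union> (\<lambda>i. {c i, c ((i+1) mod 3)}) ` {..<3}"
    unfolding cycle_complex_def by blast
  then have cyc: "cycle_complex 3 c = {{e0},{e1},{e2},{e0,e1},{e1,e2},{e2,e0}}"
    by (simp add: l3 c_def insert_commute)
  have "?K = suspension n n' (cycle_complex 3 c)"
  proof (rule subset_antisym)
    show "?K \<subseteq> suspension n n' (cycle_complex 3 c)"
    proof
      fix \<sigma> assume "\<sigma> \<in> ?K"
      then have \<sigma>: "\<sigma> \<noteq> {}" "\<sigma> \<subseteq> {n,n',e0,e1,e2}" "\<not> {n,n'} \<subseteq> \<sigma>" "\<not> {e0,e1,e2} \<subseteq> \<sigma>" by auto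
      define P where "P = \<sigma> \<inter> {n,n'}"
      define E where "E = \<sigma> \<inter> {e0,e1,e2}"
      have "\<sigma> = P \<union> E" using \<sigma>(2) by (auto simp: P_def E_def)
      moreover have "P \<in> {{}, {n}, {n'}}" using \<sigma>(3) by (auto simp: P_def)
      moreover have "E \<in> insert {} (cycle_complex 3 c)"
        unfolding cyc by (rule proper_subset_of_triangle) (use \<sigma>(4) in \<open>auto simp: E_def\<close>)
      ultimately show "\<sigma> \<in> suspension n n' (cycle_complex 3 c)"
        unfolding suspension_def using \<sigma>(1) by blast
    qed
    show "suspension n n' (cycle_complex 3 c) \<subseteq> ?K"
      using d unfolding suspension_def cyc by auto
  qed
  moreover have "is_cycle (cycle_complex 3 c) 3 c"
    using d by (auto simp: is_cycle_def inj_on_def l3 c_def)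
  moreover have "n \<notin> c ` {..<3}" "n' \<notin> c ` {..<3}" using d by (auto simp: img)
  ultimately show ?thesis
    unfolding suspension_of_ngon_def using d(1) by (intro exI[of _ n] exI[of _ n'] exI[of _ c] conjI)
qed

section \<open>Nerves of Coxeter systems\<close>

lemma nerve_closed_under_faces: "closed_under_faces (nerve S m)"
  unfolding closed_under_faces_def
proof (intro ballI allI impI)
  fix T T' assume T: "T \<in> nerve S m" and "T' \<noteq> {}" "T' \<subseteq> T"
  moreover have "special_subgroup S m T' \<subseteq> special_subgroup S m T"
    unfolding special_subgroup_def using \<open>T' \<subseteq> T\<close> by (auto intro!: image_mono lists_mono)
  ultimately show "T' \<in> nerve S m" unfolding nerve_def by (auto intro: finite_subset)
qed

lemma cox_eq_congI:
  assumes "cox_eq S m x y" "a = u @ x @ v" "b = u @ y @ v"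
  shows "cox_eq S m a b"
  using cox_eq.cong[OF assms(1), of u v] assms(2,3) by simp

lemma cox_eq_commute:
  assumes "s \<in> S" "t \<in> S" "m s t = 2"
  shows "cox_eq S m [s, t] [t, s]"
proof -
  have "cox_eq S m [s,t,s,t] []"
    using cox_eq.braid[where m=m, OF assms(1,2)] assms(3) by (simp add: alt_word_def numeral_2_eq_2)
  then have "cox_eq S m [s,t,s,t,t,s] [t,s]" by (rule cox_eq_congI[where u = "[]" and v = "[t,s]"]) auto
  moreover have "cox_eq S m [s,t,s,t,t,s] [s,t,s,s]"
    by (rule cox_eq_congI[OF cox_eq.invol[OF assms(2)], of _ "[s,t,s]" "[s]"]) auto
  moreover have "cox_eq S m [s,t,s,s] [s,t]"
    by (rule cox_eq_congI[OF cox_eq.invol[OF assms(1)], of _ "[s,t]" "[]"]) auto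
  ultimately show ?thesis by (meson cox_eq.sym cox_eq.trans)
qed

lemma cox_eq_commuting_normal_form:
  assumes c: "c \<in> S" and ac: "cox_eq S m [a, c] [c, a]" and bc: "cox_eq S m [b, c] [c, b]"
  shows "w \<in> lists {a,b,c} \<Longrightarrow> \<exists>w'\<in>lists {a,b}. cox_eq S m w w' \<or> cox_eq S m w (c # w')"
proof (induction w)
  case Nil
  then show ?case by (auto intro: cox_eq.refl)
next
  case (Cons x w)
  then obtain w' where w': "w' \<in> lists {a,b}" "cox_eq S m w w' \<or> cox_eq S m w (c # w')" by auto
  have prefix: "cox_eq S m (x # w) (x # u)" if "cox_eq S m w u" for u
    by (rule cox_eq_congI[OF that, of _ "[x]" "[]"]) auto
  have cc: "cox_eq S m (c # c # w') w'"
    by (rule cox_eq_congI[OF cox_eq.invol[OF c], of _ "[]" w']) auto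
  have swap: "cox_eq S m (x # c # w') (c # x # w')" if "x = a \<or> x = b"
    by (rule cox_eq_congI[where x = "[x, c]" and y = "[c, x]" and u = "[]" and v = w'])
      (use that ac bc in auto)
  have "x \<in> {a,b,c}" using Cons.prems by simp
  then consider "x = c" | "x = a \<or> x = b" by blast
  then show ?case
  proof cases
    case 1
    then show ?thesis using w' prefix cc cox_eq.trans by blast
  next
    case 2
    then have "x # w' \<in> lists {a,b}" using w'(1) by auto
    then show ?thesis using w' prefix swap[OF 2] cox_eq.trans by blast
  qed
qed

text \<open>If c commutes with a and b, every element of W_{a,b,c} lies in W_{a,b} or in c W_{a,b}.\<close>
lemma nerve_insert_commuting:
  assumes ab: "{a,b} \<in> nerve S m" and c: "c \<in> S"
    and mac: "m a c = 2" and mbc: "m b c = 2"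
  shows "{a,b,c} \<in> nerve S m"
proof -
  have abS: "a \<in> S" "b \<in> S" using ab unfolding nerve_def by auto
  have ac: "cox_eq S m [a, c] [c, a]" using cox_eq_commute[where m = m, OF abS(1) c mac] .
  have bc: "cox_eq S m [b, c] [c, b]" using cox_eq_commute[where m = m, OF abS(2) c mbc] .
  define A where "A = special_subgroup S m {a,b}"
  define mult_c where "mult_c E = {v. \<exists>u\<in>E. cox_eq S m (c # u) v}" for E
  have elem_eq: "cox_elem S m w = cox_elem S m w'" if "cox_eq S m w w'" for w w'
    unfolding cox_elem_def using that by (auto intro: cox_eq.trans cox_eq.sym)
  have mult_c_elem: "mult_c (cox_elem S m w) = cox_elem S m (c # w)" for w
  proof
    show "mult_c (cox_elem S m w) \<subseteq> cox_elem S m (c # w)"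
    proof
      fix v assume "v \<in> mult_c (cox_elem S m w)"
      then obtain u where u: "cox_eq S m w u" "cox_eq S m (c # u) v"
        by (auto simp: mult_c_def cox_elem_def)
      have "cox_eq S m (c # w) (c # u)" by (rule cox_eq_congI[OF u(1), of _ "[c]" "[]"]) auto
      then show "v \<in> cox_elem S m (c # w)" using u(2) cox_eq.trans by (auto simp: cox_elem_def)
    qed
    show "cox_elem S m (c # w) \<subseteq> mult_c (cox_elem S m w)"
      by (auto simp: mult_c_def cox_elem_def intro: cox_eq.refl)
  qed
  have "special_subgroup S m {a,b,c} \<subseteq> A \<union> mult_c ` A"
  proof
    fix E assume "E \<in> special_subgroup S m {a,b,c}"
    then obtain w where w: "w \<in> lists {a,b,c}" "E = cox_elem S m w"
      by (auto simp: special_subgroup_def)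
    obtain w' where w': "w' \<in> lists {a,b}" "cox_eq S m w w' \<or> cox_eq S m w (c # w')"
      using cox_eq_commuting_normal_form[OF c ac bc w(1)] by blast
    have "cox_elem S m w' \<in> A" using w'(1) by (auto simp: A_def special_subgroup_def)
    then show "E \<in> A \<union> mult_c ` A" using w' w(2) elem_eq mult_c_elem by (metis UnI1 UnI2 imageI)
  qed
  moreover have "finite A" using ab unfolding nerve_def A_def by auto
  ultimately have "finite (special_subgroup S m {a,b,c})" by (meson finite_UnI finite_imageI finite_subset)
  then show ?thesis using abS c unfolding nerve_def by auto
qed

section \<open>Links of vertices\<close>

lemma notin_verts_link: "s \<notin> verts (link K s)"
  unfolding verts_def link_def by blast

lemma simplex_subset_insert_verts_link:
  assumes "closed_under_faces K" "\<sigma> \<in> K" "s \<in> \<sigma>"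
  shows "\<sigma> \<subseteq> insert s (verts (link K s))"
proof
  fix v assume v: "v \<in> \<sigma>"
  show "v \<in> insert s (verts (link K s))"
  proof (cases "v = s")
    case False
    have "{v} \<in> K" using closed_under_facesD[OF assms(1,2)] v by blast
    then have "{v} \<in> link K s" unfolding link_def using assms(2,3) v False by blast
    then show ?thesis unfolding verts_def by blast
  qed simp
qed

lemma link_memI:
  assumes "\<tau> \<in> K" "\<sigma> \<in> K" "s \<in> \<sigma>" "\<tau> \<subseteq> \<sigma>" "s \<notin> \<tau>"
  shows "\<tau> \<in> link K s"
  using assms unfolding link_def by blast

lemma full_subcomplex_star_if_link:
  assumes faces: "closed_under_faces K" and full: "full_subcomplex K (link K s)"
  shows "full_subcomplex K (star K s)"
  unfolding full_subcomplex_def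
proof (intro conjI ballI impI)
  show "star K s \<subseteq> K" unfolding star_def by blast
  fix \<sigma> assume \<sigma>: "\<sigma> \<in> K" "\<sigma> \<subseteq> verts (star K s)"
  show "\<sigma> \<in> star K s"
  proof (cases "s \<in> \<sigma>")
    case True
    then show ?thesis using \<sigma>(1) unfolding star_def by blast
  next
    case False
    have "verts (star K s) \<subseteq> insert s (verts (link K s))"
      using simplex_subset_insert_verts_link[OF faces] unfolding verts_def star_def by blast
    then have "\<sigma> \<subseteq> verts (link K s)" using \<sigma>(2) False by blast
    then have "\<sigma> \<in> link K s" using full \<sigma>(1) unfolding full_subcomplex_def by blast
    then show ?thesis unfolding link_def star_def by blast
  qed
qed

text \<open>Near s the realization then lies in the two triangles s a c and s b c glued along s c,
  so (x_a - x_b, x_c) is an injective chart from a neighbourhood of s onto a half-plane.\<close>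
lemma triangulation_S2_star_not_in_two_triangles:
  assumes tri: "triangulates_S2 K" and sK: "{s} \<in> K" and "distinct [s, a, b, c]"
    and st: "\<And>\<sigma>. \<sigma> \<in> K \<Longrightarrow> s \<in> \<sigma> \<Longrightarrow> \<sigma> \<subseteq> {s,a,c} \<or> \<sigma> \<subseteq> {s,b,c}"
  shows False
proof -
  from \<open>distinct [s, a, b, c]\<close> have d: "a \<noteq> b" "a \<noteq> c" "b \<noteq> c" "s \<noteq> a" "s \<noteq> b" "s \<noteq> c"
    by auto
  define R where "R = realization K"
  define U where "U = R \<inter> {x. 0 < x s}"
  define p :: "'a \<Rightarrow> real" where "p = (\<lambda>v. if v = s then 1 else 0)"
  define \<phi> :: "('a \<Rightarrow> real) \<Rightarrow> real^2" where "\<phi> x = (x a - x b) *\<^sub>R axis 1 1 + x c *\<^sub>R axis 2 1" for x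
  have hom: "R homeomorphic sphere (0::real^3) 1" using tri triangulates_S2_def R_def by blast
  have "open {x::'a\<Rightarrow>real. 0 < x s}" by (rule open_Collect_less) auto
  then have U: "openin (top_of_set R) U" unfolding U_def by (rule openin_open_Int)
  have "p \<in> R" unfolding R_def realization_def using sK by (auto simp: p_def intro!: bexI[of _ "{s}"])
  then have pU: "p \<in> U" by (simp add: U_def p_def)
  have cont: "continuous_on U \<phi>" unfolding \<phi>_def
    by (intro continuous_intros continuous_on_subset[OF continuous_on_product_coordinates]) auto
  have p0: "\<phi> p = 0" using d by (simp add: \<phi>_def p_def)
  have coords: "(\<forall>v. v \<notin> {s,a,b,c} \<longrightarrow> x v = 0) \<and> (\<forall>v. 0 \<le> x v) \<and> (x a = 0 \<or> x b = 0)
      \<and> x s + x a + x b + x c = 1" if xU: "x \<in> U" for x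
  proof -
    obtain \<sigma> where \<sigma>: "\<sigma> \<in> K" "\<forall>v. v \<notin> \<sigma> \<longrightarrow> x v = 0" "\<forall>v. 0 \<le> x v" "sum x \<sigma> = 1"
      using xU unfolding U_def R_def realization_def by blast
    have "s \<in> \<sigma>" using \<sigma>(2) xU unfolding U_def by force
    then have sub: "\<sigma> \<subseteq> {s,a,c} \<or> \<sigma> \<subseteq> {s,b,c}" using st \<sigma>(1) by blast
    then have "\<sigma> \<subseteq> {s,a,b,c}" by blast
    moreover have "sum x {s,a,b,c} = sum x \<sigma>"
      by (rule sum.mono_neutral_right) (use calculation \<sigma>(2) in auto)
    then have "x s + x a + x b + x c = 1" using \<sigma>(4) d by (simp add: add.assoc)
    moreover have "x a = 0 \<or> x b = 0" using sub \<sigma>(2) d by blast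
    ultimately show ?thesis using \<sigma>(2,3) by blast
  qed
  have inj: "inj_on \<phi> U"
  proof (rule inj_onI)
    fix x y assume xU: "x \<in> U" and yU: "y \<in> U" and e: "\<phi> x = \<phi> y"
    have e1: "x a - x b = y a - y b" using arg_cong[OF e, of "\<lambda>z. z $ 1"] by (simp add: \<phi>_def axis_def)
    have e2: "x c = y c" using arg_cong[OF e, of "\<lambda>z. z $ 2"] by (simp add: \<phi>_def axis_def)
    note cx = coords[OF xU] and cy = coords[OF yU]
    have ab: "x a = y a" "x b = y b" using cx cy e1 by (smt (verit))+
    have "x s = y s" using cx cy ab e2 by linarith
    show "x = y"
    proof
      fix v
      show "x v = y v" using cx cy ab e2 \<open>x s = y s\<close> by (cases "v \<in> {s,a,b,c}") auto
    qed
  qed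
  have "\<phi> x $ 2 \<ge> 0" if "x \<in> U" for x
    using coords[OF that] by (simp add: \<phi>_def axis_def)
  then show False
    by (rule homeomorphic_sphere_no_half_plane_chart[OF hom U pU cont inj p0])
qed

lemma valence_three_triangle:
  assumes tri: "triangulates_S2 K" and faces: "closed_under_faces K" and sK: "{s} \<in> K"
    and vl: "verts (link K s) = {a,b,c}" and d: "distinct [s, a, b, c]"
  shows "{s,a,b} \<in> K"
proof (rule ccontr)
  assume nab: "{s,a,b} \<notin> K"
  have "\<sigma> \<subseteq> {s,a,c} \<or> \<sigma> \<subseteq> {s,b,c}" if \<sigma>: "\<sigma> \<in> K" "s \<in> \<sigma>" for \<sigma>
  proof -
    have "\<not> {s,a,b} \<subseteq> \<sigma>"
    proof
      assume "{s,a,b} \<subseteq> \<sigma>"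
      then have "{s,a,b} \<in> K" using closed_under_facesD[OF faces \<sigma>(1)] by simp
      with nab show False ..
    qed
    then have "a \<notin> \<sigma> \<or> b \<notin> \<sigma>" using \<sigma>(2) by blast
    moreover have "\<sigma> \<subseteq> {s,a,b,c}" using simplex_subset_insert_verts_link[OF faces \<sigma>] vl by simp
    ultimately show ?thesis by auto
  qed
  then show False by (rule triangulation_S2_star_not_in_two_triangles[OF tri sK d])
qed

lemma link_full_if_valence_three:
  assumes tri: "triangulates_S2 K" and faces: "closed_under_faces K"
    and nb: "\<not> boundary_of_3simplex K"
    and vl: "verts (link K s) = {s0,s1,s2}" and d: "distinct [s0, s1, s2]"
  shows "full_subcomplex K (link K s)"
proof -
  have "s \<notin> {s0,s1,s2}" using notin_verts_link[of s K] vl by simp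
  with d have d4: "distinct [s, s0, s1, s2]" by simp
  have sK: "{s} \<in> K"
  proof -
    obtain \<tau> where "\<tau> \<in> link K s" using vl unfolding verts_def by auto
    then obtain \<sigma> where "\<sigma> \<in> K" "s \<in> \<sigma>" unfolding link_def by blast
    then show ?thesis using closed_under_facesD[OF faces] by blast
  qed
  have t01: "{s,s0,s1} \<in> K" by (rule valence_three_triangle[OF tri faces sK vl d4])
  have t12: "{s,s1,s2} \<in> K"
    by (rule valence_three_triangle[OF tri faces sK, of s1 s2 s0]) (use vl d4 in auto)
  have t02: "{s,s0,s2} \<in> K"
    by (rule valence_three_triangle[OF tri faces sK, of s0 s2 s1]) (use vl d4 in auto)
  have no_face: "{s0,s1,s2} \<notin> K"
  proof
    assume "{s0,s1,s2} \<in> K"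
    then have "boundary_of_3simplex K"
      by (rule triangulation_S2_eq_tetrahedron_boundary[OF tri faces d4 _ t12 t02 t01])
    with nb show False ..
  qed
  show ?thesis unfolding full_subcomplex_def
  proof (intro conjI ballI impI)
    show "link K s \<subseteq> K" unfolding link_def by blast
    fix \<sigma> assume \<sigma>: "\<sigma> \<in> K" "\<sigma> \<subseteq> verts (link K s)"
    have sub: "\<sigma> \<subseteq> {s0,s1,s2}" using \<sigma>(2) vl by simp
    have s: "s \<notin> \<sigma>" using \<sigma>(2) notin_verts_link[of s K] by blast
    have "\<not> {s0,s1,s2} \<subseteq> \<sigma>" using no_face \<sigma>(1) sub by (metis subset_antisym)
    then consider "s0 \<notin> \<sigma>" | "s1 \<notin> \<sigma>" | "s2 \<notin> \<sigma>" by auto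
    then show "\<sigma> \<in> link K s"
    proof cases
      case 1
      then show ?thesis using link_memI[OF \<sigma>(1) t12 _ _ s] sub by blast
    next
      case 2
      then show ?thesis using link_memI[OF \<sigma>(1) t02 _ _ s] sub by blast
    next
      case 3
      then show ?thesis using link_memI[OF \<sigma>(1) t01 _ _ s] sub by blast
    qed
  qed
qed

lemma cycle_link_triangle:
  assumes faces: "closed_under_faces K" and lk: "link K s = cycle_complex n c" and i: "i < n"
  shows "{s, c i, c ((i + 1) mod n)} \<in> K"
proof -
  have "{c i, c ((i + 1) mod n)} \<in> link K s" unfolding lk cycle_complex_def using i by blast
  then obtain \<sigma> where "\<sigma> \<in> K" "s \<in> \<sigma>" "{c i, c ((i + 1) mod n)} \<subseteq> \<sigma>" unfolding link_def by blast
  then show ?thesis using closed_under_facesD[OF faces, of \<sigma> "{s, c i, c ((i + 1) mod n)}"] by blast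
qed

lemma link_full_if_square_without_diagonals:
  assumes faces: "closed_under_faces K" and lk: "link K s = cycle_complex 4 c"
    and no02: "{c 0, c 2} \<notin> K" and no13: "{c 1, c 3} \<notin> K"
  shows "full_subcomplex K (link K s)"
proof -
  have edge: "{c i, c ((i + 1) mod 4)} \<in> link K s" if "i < 4" for i
    unfolding lk cycle_complex_def using that by blast
  have verts_sub: "verts (link K s) \<subseteq> {c 0, c 1, c 2, c 3}"
  proof
    fix v assume "v \<in> verts (link K s)"
    then obtain i where "i < 4" "v = c i \<or> v = c ((i + 1) mod 4)"
      unfolding verts_def lk cycle_complex_def by blast
    then obtain j :: nat where "j < 4" "v = c j" by (metis mod_less_divisor zero_less_numeral)
    then show "v \<in> {c 0, c 1, c 2, c 3}" by (auto simp: less_Suc_eq numeral_eq_Suc)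
  qed
  show ?thesis unfolding full_subcomplex_def
  proof (intro conjI ballI impI)
    show "link K s \<subseteq> K" unfolding link_def by blast
    fix \<sigma> assume \<sigma>: "\<sigma> \<in> K" "\<sigma> \<subseteq> verts (link K s)"
    have s: "s \<notin> \<sigma>" using \<sigma>(2) notin_verts_link[of s K] by blast
    have sub: "\<sigma> \<subseteq> {c 0, c 1, c 2, c 3}" using \<sigma>(2) verts_sub by blast
    have diag: "\<not> {c 0, c 2} \<subseteq> \<sigma>" "\<not> {c 1, c 3} \<subseteq> \<sigma>"
      using no02 no13 closed_under_facesD[OF faces \<sigma>(1)] by auto
    have "\<exists>i<4. \<sigma> \<subseteq> {c i, c ((i + 1) mod 4)}"
    proof (cases "c 0 \<in> \<sigma>"; cases "c 1 \<in> \<sigma>")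
      assume "c 0 \<in> \<sigma>" "c 1 \<in> \<sigma>"
      then have "\<sigma> \<subseteq> {c 0, c 1}" using sub diag by blast
      then show ?thesis by (intro exI[of _ 0]) simp
    next
      assume "c 0 \<in> \<sigma>" "c 1 \<notin> \<sigma>"
      then have "\<sigma> \<subseteq> {c 3, c 0}" using sub diag by blast
      then show ?thesis by (intro exI[of _ 3]) simp
    next
      assume "c 0 \<notin> \<sigma>" "c 1 \<in> \<sigma>"
      then have "\<sigma> \<subseteq> {c 1, c 2}" using sub diag by blast
      then show ?thesis by (intro exI[of _ 1]) (simp add: numeral_2_eq_2)
    next
      assume "c 0 \<notin> \<sigma>" "c 1 \<notin> \<sigma>"
      then have "\<sigma> \<subseteq> {c 2, c 3}" using sub diag by blast
      then show ?thesis by (intro exI[of _ 2]) simp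
    qed
    then obtain i where i: "i < 4" "\<sigma> \<subseteq> {c i, c ((i + 1) mod 4)}" by blast
    from edge[OF i(1)] obtain \<tau> where "\<tau> \<in> K" "s \<in> \<tau>" "{c i, c ((i + 1) mod 4)} \<subseteq> \<tau>"
      unfolding link_def by blast
    then have "\<tau> \<in> K" "s \<in> \<tau>" "\<sigma> \<subseteq> \<tau>" using i(2) by auto
    then show "\<sigma> \<in> link K s" using link_memI[OF \<sigma>(1) _ _ _ s] by blast
  qed
qed

lemma nerve_square_diagonal_imp_suspension:
  assumes cm: "coxeter_matrix S m" and tri: "triangulates_S2 (nerve S m)"
    and d: "distinct [s, a0, a1, a2, a3]"
    and t: "{s,a0,a1} \<in> nerve S m" "{s,a1,a2} \<in> nerve S m" "{s,a2,a3} \<in> nerve S m"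
      "{s,a3,a0} \<in> nerve S m"
    and mm: "m a0 a1 = 2" "m a1 a2 = 2" "m a2 a3 = 2" "m a3 a0 = 2"
    and diag: "{a0,a2} \<in> nerve S m"
  shows "suspension_of_ngon (nerve S m) 3"
proof -
  have inS: "a0 \<in> S" "a1 \<in> S" "a2 \<in> S" "a3 \<in> S" using t unfolding nerve_def by auto
  have sym: "m x y = m y x" if "x \<in> S" "y \<in> S" for x y
    using cm that unfolding coxeter_matrix_def by blast
  have "{a0,a2,a1} \<in> nerve S m"
    by (rule nerve_insert_commuting[OF diag inS(2)]) (use mm sym[OF inS(2,3)] in auto)
  moreover have "{a0,a2,a3} \<in> nerve S m"
    by (rule nerve_insert_commuting[OF diag inS(4)]) (use mm sym[OF inS(4,1)] in auto)
  moreover have d': "distinct [a1, a3, s, a0, a2]" using d by auto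
  ultimately have "nerve S m =
      {\<sigma>. \<sigma> \<noteq> {} \<and> \<sigma> \<subseteq> {a1,a3,s,a0,a2} \<and> \<not> {a1,a3} \<subseteq> \<sigma> \<and> \<not> {s,a0,a2} \<subseteq> \<sigma>}"
    using t by (intro triangulation_S2_eq_suspension_of_triangle[OF tri nerve_closed_under_faces d'])
      (auto simp: insert_commute)
  then show ?thesis using suspension_of_ngon_triangle[OF d'] by simp
qed

lemma four_euclidean_nerve_link_full:
  assumes cm: "coxeter_matrix S m" and tri: "triangulates_S2 (nerve S m)"
    and fe: "four_euclidean (nerve S m) m s" and ns: "\<not> suspension_of_ngon (nerve S m) 3"
  shows "full_subcomplex (nerve S m) (link (nerve S m) s)"
proof -
  let ?K = "nerve S m"
  obtain c where cyc: "is_cycle (link ?K s) 4 c" and mc: "\<forall>i<4. m (c i) (c ((i + 1) mod 4)) = 2"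
    using fe unfolding four_euclidean_def by blast
  have lk: "link ?K s = cycle_complex 4 c" and inj: "inj_on c {..<4}"
    using cyc unfolding is_cycle_def by auto
  have "c i \<in> verts (link ?K s)" if "i < 4" for i
    unfolding lk cycle_complex_def verts_def using that by blast
  then have "s \<noteq> c i" if "i < 4" for i using that notin_verts_link[of s ?K] by metis
  moreover have "c i \<noteq> c j" if "i < 4" "j < 4" "i \<noteq> j" for i j
    using inj_onD[OF inj _ _] that by blast
  ultimately have d: "distinct [s, c 0, c 1, c 2, c 3]" "distinct [s, c 1, c 2, c 3, c 0]"
    by simp_all
  have t: "{s, c i, c ((i + 1) mod 4)} \<in> ?K" if "i < 4" for i
    by (rule cycle_link_triangle[OF nerve_closed_under_faces lk that])
  have succ: "(0 + 1) mod 4 = (1::nat)" "(1 + 1) mod 4 = (2::nat)" "(2 + 1) mod 4 = (3::nat)"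
    "(3 + 1) mod 4 = (0::nat)"
    by simp_all
  have t0: "{s, c 0, c 1} \<in> ?K" and t1: "{s, c 1, c 2} \<in> ?K" and t2: "{s, c 2, c 3} \<in> ?K"
    and t3: "{s, c 3, c 0} \<in> ?K"
    using t[of 0, unfolded succ] t[of 1, unfolded succ] t[of 2, unfolded succ] t[of 3, unfolded succ]
    by simp_all
  have m0: "m (c 0) (c 1) = 2" and m1: "m (c 1) (c 2) = 2" and m2: "m (c 2) (c 3) = 2"
    and m3: "m (c 3) (c 0) = 2"
    using mc[rule_format, of 0, unfolded succ] mc[rule_format, of 1, unfolded succ]
      mc[rule_format, of 2, unfolded succ] mc[rule_format, of 3, unfolded succ]
    by simp_all
  have "{c 0, c 2} \<notin> ?K"
    using nerve_square_diagonal_imp_suspension[OF cm tri d(1) t0 t1 t2 t3 m0 m1 m2 m3] ns by blast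
  moreover have "{c 1, c 3} \<notin> ?K"
    using nerve_square_diagonal_imp_suspension[OF cm tri d(2) t1 t2 t3 t0 m1 m2 m3 m0] ns by blast
  ultimately show ?thesis
    by (rule link_full_if_square_without_diagonals[OF nerve_closed_under_faces lk])
qed

theorem mainTheorem3:
  fixes S :: "'a set" and m :: "'a \<Rightarrow> 'a \<Rightarrow> nat" and s :: 'a
  assumes "coxeter_matrix S m"
    and "triangulates_S2 (nerve S m)"
    and "\<not> boundary_of_3simplex (nerve S m)"
    and "s \<in> S"
  shows "(three_euclidean (nerve S m) m s \<longrightarrow>
            full_subcomplex (nerve S m) (link (nerve S m) s) \<and>
            full_subcomplex (nerve S m) (star (nerve S m) s))
       \<and> (four_euclidean (nerve S m) m s \<and> \<not> suspension_of_ngon (nerve S m) 3 \<longrightarrow>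
            full_subcomplex (nerve S m) (link (nerve S m) s) \<and>
            full_subcomplex (nerve S m) (star (nerve S m) s))"
proof -
  let ?K = "nerve S m"
  have faces: "closed_under_faces ?K" by (rule nerve_closed_under_faces)
  have "full_subcomplex ?K (link ?K s)" if three: "three_euclidean ?K m s"
  proof -
    obtain s0 s1 s2 where "valence ?K s = 3" and vl: "verts (link ?K s) = {s0,s1,s2}"
      using three unfolding three_euclidean_def by blast
    then have "distinct [s0, s1, s2]" unfolding valence_def by (intro card_distinct) simp
    then show ?thesis by (rule link_full_if_valence_three[OF assms(2) faces assms(3) vl])
  qed
  moreover have "full_subcomplex ?K (link ?K s)"
    if "four_euclidean ?K m s" "\<not> suspension_of_ngon ?K 3"
    using four_euclidean_nerve_link_full[OF assms(1,2) that] .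
  ultimately show ?thesis using full_subcomplex_star_if_link[OF faces] by blast
qed

end
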